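(* Let $\mathcal{G}$ be a GBS graph of groups and $w=a_0^{k_0}y_1a_1^{k_1}\cdots y_na_n^{k_n}$ a $\mathcal{G}$-factorization, with the alphabet $\Sigma_w$, its involution, $\Lambda_w$ and the words $\mathcal{C}(w_{i,j})$ as defined in the context. Then for all $0\le i\le j\le n$: $w_{i,j}$ represents an element of $\langle a_i\rangle\le F(\mathcal{G})$ if and only if $\mathcal{C}(w_{i,j})=1$ in the free group $F_{\Lambda_w}$.
   Context: $\mathcal{G}$: finite connected graph $Y$ (vertices $V(Y)$, edges $E(Y)$, maps $\iota,\tau$, fixed-point-free involution $y\mapsto\bar y$ with $\iota(\bar y)=\tau(y)$) and integers $\alpha_y,\beta_y\ne0$ with $\alpha_y=\beta_{\bar y}$; $F(\mathcal{G})$ has generators $V(Y)\cup E(Y)$ and relations $\bar yy=1$, $y\,b^{\beta_y}\bar y=a^{\alpha_y}$ ($a=\iota(y)$, $b=\tau(y)$). A $\mathcal{G}$-factorization is a word $a_0^{k_0}y_1a_1^{k_1}\cdots y_na_n^{k_n}$ with $\iota(y_i)=a_{i-1}$, $\tau(y_i)=a_i$, $a_n=a_0$, $k_i\in\mathbb{Z}$. For $0\le i\le j\le n$: $w_{i,j}=a_i^{k_i}y_{i+1}\cdots y_ja_j^{k_j}$, $k_{i,j}=\sum_{\nu=i}^{j}k_\nu\prod_{\mu=i+1}^{\nu}\alpha_{y_\mu}/\beta_{y_\mu}\in\mathbb{Q}$. Fix an orientation $D\subseteq E(Y)$ and let $\rho$ map words additively to $\mathbb{Z}^D$ via $\rho(a^k)=0$,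 $\rho(y)=e_y$, $\rho(\bar y)=-e_y$ ($y\in D$). On $\{1,\dots,n\}$ let $i\sim_{\mathcal{C}}j$ iff $y_i=\bar y_j$ and, for $i<j$, $\rho(w_{i,j-1})=0$ and $k_{i,j-1}\in\beta_{y_i}\mathbb{Z}$ (symmetrically for $j<i$); let $i\approx j$ iff $i=j$ or $i\sim_{\mathcal{C}}\ell\sim_{\mathcal{C}}j$ for some $\ell$ (an equivalence relation). $\Sigma_w$ is the set of $\approx$-classes $[i]$, enlarged as follows: for each class $[i]$, $\overline{[i]}:=[j]$ if $i\sim_{\mathcal{C}}j$ for some $j$ (this is well defined), and otherwise $\overline{[i]}$ is a new element added to $\Sigma_w$; this gives a fixed-point-free involution on $\Sigma_w$. $\Lambda_w\subseteq\Sigma_w$ contains exactly one element of each pair $\{x,\bar x\}$, and $F_{\Lambda_w}$ is the free group on $\Lambda_w$ with $\bar x=x^{-1}$. Finally $\mathcal{C}(w_{i,j})=[i+1][i+2]\cdots[j]\in\Sigma_w^*$ and $\mathcal{C}(w)=[1]\cdots[n]$. *)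

theory Defs
  imports Complex_Main
begin

text \<open>Words over generators of type 'g: a letter (g, True) is g, (g, False) is g^-1.
  pres_eq R u v: u and v represent the same element of the group
  generated by 'g with relators R (i.e. equality modulo the normal closure of R
  in the free group). With R = {} this is equality in the free group.\<close>

inductive pres_eq :: "('g \<times> bool) list set \<Rightarrow> ('g \<times> bool) list \<Rightarrow> ('g \<times> bool) list \<Rightarrow> bool"
  for R where
  pe_refl: "pres_eq R u u"
| pe_sym: "pres_eq R u v \<Longrightarrow> pres_eq R v u"
| pe_trans: "pres_eq R u v \<Longrightarrow> pres_eq R v w \<Longrightarrow> pres_eq R u w"
| pe_cancel: "pres_eq R (u @ [(x, b), (x, \<not> b)] @ v) (u @ v)"
| pe_rel: "r \<in> R \<Longrightarrow> pres_eq R (u @ r @ v) (u @ v)"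

definition gpow :: "'g \<Rightarrow> int \<Rightarrow> ('g \<times> bool) list" where
  "gpow g m = replicate (nat \<bar>m\<bar>) (g, m \<ge> 0)"

definition gbs_graph ::
  "'v set \<Rightarrow> 'e set \<Rightarrow> ('e \<Rightarrow> 'v) \<Rightarrow> ('e \<Rightarrow> 'v) \<Rightarrow> ('e \<Rightarrow> 'e) \<Rightarrow> ('e \<Rightarrow> int) \<Rightarrow> ('e \<Rightarrow> int) \<Rightarrow> bool"
  where
  "gbs_graph V E \<iota> \<tau> ebar \<alpha> \<beta> \<longleftrightarrow>
     finite V \<and> finite E \<and> V \<noteq> {} \<and>
     (\<forall>y\<in>E. \<iota> y \<in> V \<and> \<tau> y \<in> V \<and> ebar y \<in> E \<and> ebar y \<noteq> y \<and> ebar (ebar y) = y \<and>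
              \<iota> (ebar y) = \<tau> y \<and> \<alpha> y \<noteq> 0 \<and> \<beta> y \<noteq> 0 \<and> \<alpha> y = \<beta> (ebar y)) \<and>
     (\<forall>u\<in>V. \<forall>v\<in>V. (u, v) \<in> {(\<iota> y, \<tau> y) | y. y \<in> E}\<^sup>*)"

text \<open>Relators of F(G): generators are Inl a (vertices) and Inr y (edges).\<close>
definition gbs_relators ::
  "'e set \<Rightarrow> ('e \<Rightarrow> 'v) \<Rightarrow> ('e \<Rightarrow> 'v) \<Rightarrow> ('e \<Rightarrow> 'e) \<Rightarrow> ('e \<Rightarrow> int) \<Rightarrow> ('e \<Rightarrow> int)
     \<Rightarrow> (('v + 'e) \<times> bool) list set" where
  "gbs_relators E \<iota> \<tau> ebar \<alpha> \<beta> =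
     {[(Inr (ebar y), True), (Inr y, True)] | y. y \<in> E} \<union>
     {[(Inr y, True)] @ gpow (Inl (\<tau> y)) (\<beta> y) @ [(Inr (ebar y), True)] @ gpow (Inl (\<iota> y)) (- \<alpha> y)
       | y. y \<in> E}"

text \<open>G-factorization a_0^{k_0} y_1 a_1^{k_1} ... y_n a_n^{k_n}.\<close>
definition gbs_factorization ::
  "'v set \<Rightarrow> 'e set \<Rightarrow> ('e \<Rightarrow> 'v) \<Rightarrow> ('e \<Rightarrow> 'v) \<Rightarrow> nat \<Rightarrow> (nat \<Rightarrow> 'v) \<Rightarrow> (nat \<Rightarrow> 'e) \<Rightarrow> bool" where
  "gbs_factorization V E \<iota> \<tau> n a y \<longleftrightarrow>
     (\<forall>i\<le>n. a i \<in> V) \<and>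
     (\<forall>i\<in>{1..n}. y i \<in> E \<and> \<iota> (y i) = a (i - 1) \<and> \<tau> (y i) = a i) \<and> a n = a 0"

definition wword :: "(nat \<Rightarrow> 'v) \<Rightarrow> (nat \<Rightarrow> 'e) \<Rightarrow> (nat \<Rightarrow> int) \<Rightarrow> nat \<Rightarrow> nat \<Rightarrow> (('v + 'e) \<times> bool) list" where
  "wword a y k i j = gpow (Inl (a i)) (k i) @
     concat (map (\<lambda>\<nu>. [(Inr (y \<nu>), True)] @ gpow (Inl (a \<nu>)) (k \<nu>)) [Suc i..<Suc j])"

definition kq :: "('e \<Rightarrow> int) \<Rightarrow> ('e \<Rightarrow> int) \<Rightarrow> (nat \<Rightarrow> 'e) \<Rightarrow> (nat \<Rightarrow> int) \<Rightarrow> nat \<Rightarrow> nat \<Rightarrow> rat" where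
  "kq \<alpha> \<beta> y k i j = (\<Sum>\<nu>=i..j. of_int (k \<nu>) *
       (\<Prod>\<mu>\<in>{i+1..\<nu>}. of_int (\<alpha> (y \<mu>)) / of_int (\<beta> (y \<mu>))))"

definition orientation :: "'e set \<Rightarrow> ('e \<Rightarrow> 'e) \<Rightarrow> 'e set \<Rightarrow> bool" where
  "orientation E ebar D \<longleftrightarrow> D \<subseteq> E \<and> (\<forall>y\<in>E. (y \<in> D) \<noteq> (ebar y \<in> D))"

text \<open>rho(w_{i,j}) \<in> Z^D, as a function on D.\<close>
definition rho :: "('e \<Rightarrow> 'e) \<Rightarrow> (nat \<Rightarrow> 'e) \<Rightarrow> nat \<Rightarrow> nat \<Rightarrow> 'e \<Rightarrow> int" where
  "rho ebar y i j d = (\<Sum>\<nu>\<in>{i+1..j}. (if y \<nu> = d then 1 else 0) - (if y \<nu> = ebar d then 1 else 0))"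

definition simC_cond ::
  "('e \<Rightarrow> 'e) \<Rightarrow> ('e \<Rightarrow> int) \<Rightarrow> ('e \<Rightarrow> int) \<Rightarrow> 'e set \<Rightarrow> (nat \<Rightarrow> 'e) \<Rightarrow> (nat \<Rightarrow> int) \<Rightarrow> nat \<Rightarrow> nat \<Rightarrow> bool" where
  "simC_cond ebar \<alpha> \<beta> D y k i j \<longleftrightarrow>
     (\<forall>d\<in>D. rho ebar y i (j - 1) d = 0) \<and>
     (\<exists>m::int. kq \<alpha> \<beta> y k i (j - 1) = of_int (\<beta> (y i)) * of_int m)"

definition simC ::
  "nat \<Rightarrow> ('e \<Rightarrow> 'e) \<Rightarrow> ('e \<Rightarrow> int) \<Rightarrow> ('e \<Rightarrow> int) \<Rightarrow> 'e set \<Rightarrow> (nat \<Rightarrow> 'e) \<Rightarrow> (nat \<Rightarrow> int) \<Rightarrow> nat \<Rightarrow> nat \<Rightarrow> bool" where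
  "simC n ebar \<alpha> \<beta> D y k i j \<longleftrightarrow>
     i \<in> {1..n} \<and> j \<in> {1..n} \<and> y i = ebar (y j) \<and>
     ((i < j \<and> simC_cond ebar \<alpha> \<beta> D y k i j) \<or> (j < i \<and> simC_cond ebar \<alpha> \<beta> D y k j i))"

definition approx ::
  "nat \<Rightarrow> ('e \<Rightarrow> 'e) \<Rightarrow> ('e \<Rightarrow> int) \<Rightarrow> ('e \<Rightarrow> int) \<Rightarrow> 'e set \<Rightarrow> (nat \<Rightarrow> 'e) \<Rightarrow> (nat \<Rightarrow> int) \<Rightarrow> nat \<Rightarrow> nat \<Rightarrow> bool" where
  "approx n ebar \<alpha> \<beta> D y k i j \<longleftrightarrow>
     i \<in> {1..n} \<and> j \<in> {1..n} \<and>
     (i = j \<or> (\<exists>l. simC n ebar \<alpha> \<beta> D y k i l \<and> simC n ebar \<alpha> \<beta> D y k l j))"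

definition cls ::
  "nat \<Rightarrow> ('e \<Rightarrow> 'e) \<Rightarrow> ('e \<Rightarrow> int) \<Rightarrow> ('e \<Rightarrow> int) \<Rightarrow> 'e set \<Rightarrow> (nat \<Rightarrow> 'e) \<Rightarrow> (nat \<Rightarrow> int) \<Rightarrow> nat \<Rightarrow> nat set" where
  "cls n ebar \<alpha> \<beta> D y k i = {j. approx n ebar \<alpha> \<beta> D y k i j}"

text \<open>Alphabet Sigma_w: (C, False) is the class C itself; (C, True) is the newly added
  formal element bar C for a class C without a ~C-partner.\<close>
definition Sigma_w ::
  "nat \<Rightarrow> ('e \<Rightarrow> 'e) \<Rightarrow> ('e \<Rightarrow> int) \<Rightarrow> ('e \<Rightarrow> int) \<Rightarrow> 'e set \<Rightarrow> (nat \<Rightarrow> 'e) \<Rightarrow> (nat \<Rightarrow> int) \<Rightarrow> (nat set \<times> bool) set" where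
  "Sigma_w n ebar \<alpha> \<beta> D y k =
     {(cls n ebar \<alpha> \<beta> D y k \<nu>, False) | \<nu>. \<nu> \<in> {1..n}} \<union>
     {(cls n ebar \<alpha> \<beta> D y k \<nu>, True) | \<nu>. \<nu> \<in> {1..n} \<and> \<not> (\<exists>j. simC n ebar \<alpha> \<beta> D y k \<nu> j)}"

definition sbar ::
  "nat \<Rightarrow> ('e \<Rightarrow> 'e) \<Rightarrow> ('e \<Rightarrow> int) \<Rightarrow> ('e \<Rightarrow> int) \<Rightarrow> 'e set \<Rightarrow> (nat \<Rightarrow> 'e) \<Rightarrow> (nat \<Rightarrow> int) \<Rightarrow> nat set \<times> bool \<Rightarrow> nat set \<times> bool" where
  "sbar n ebar \<alpha> \<beta> D y k x =
     (if snd x then (fst x, False)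
      else if (\<exists>i\<in>fst x. \<exists>j. simC n ebar \<alpha> \<beta> D y k i j)
        then (cls n ebar \<alpha> \<beta> D y k (SOME j. \<exists>i\<in>fst x. simC n ebar \<alpha> \<beta> D y k i j), False)
        else (fst x, True))"

definition Lambda_ok ::
  "nat \<Rightarrow> ('e \<Rightarrow> 'e) \<Rightarrow> ('e \<Rightarrow> int) \<Rightarrow> ('e \<Rightarrow> int) \<Rightarrow> 'e set \<Rightarrow> (nat \<Rightarrow> 'e) \<Rightarrow> (nat \<Rightarrow> int) \<Rightarrow> (nat set \<times> bool) set \<Rightarrow> bool" where
  "Lambda_ok n ebar \<alpha> \<beta> D y k \<Lambda> \<longleftrightarrow>
     \<Lambda> \<subseteq> Sigma_w n ebar \<alpha> \<beta> D y k \<and>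
     (\<forall>x\<in>Sigma_w n ebar \<alpha> \<beta> D y k. (x \<in> \<Lambda>) \<noteq> (sbar n ebar \<alpha> \<beta> D y k x \<in> \<Lambda>))"

text \<open>Image of a letter of Sigma_w in the free group on Lambda (bar x = x^-1).\<close>
definition toF ::
  "nat \<Rightarrow> ('e \<Rightarrow> 'e) \<Rightarrow> ('e \<Rightarrow> int) \<Rightarrow> ('e \<Rightarrow> int) \<Rightarrow> 'e set \<Rightarrow> (nat \<Rightarrow> 'e) \<Rightarrow> (nat \<Rightarrow> int) \<Rightarrow> (nat set \<times> bool) set
     \<Rightarrow> nat set \<times> bool \<Rightarrow> (nat set \<times> bool) \<times> bool" where
  "toF n ebar \<alpha> \<beta> D y k \<Lambda> x =
     (if x \<in> \<Lambda> then (x, True) else (sbar n ebar \<alpha> \<beta> D y k x, False))"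

definition Cword ::
  "nat \<Rightarrow> ('e \<Rightarrow> 'e) \<Rightarrow> ('e \<Rightarrow> int) \<Rightarrow> ('e \<Rightarrow> int) \<Rightarrow> 'e set \<Rightarrow> (nat \<Rightarrow> 'e) \<Rightarrow> (nat \<Rightarrow> int) \<Rightarrow> nat \<Rightarrow> nat \<Rightarrow> (nat set \<times> bool) list" where
  "Cword n ebar \<alpha> \<beta> D y k i j = map (\<lambda>\<nu>. (cls n ebar \<alpha> \<beta> D y k \<nu>, False)) [Suc i..<Suc j]"

end

theory Submission
  imports Defs
begin

text \<open>Read \<open>w\<^sub>i\<^sub>,\<^sub>j\<close> from left to right, keeping a reduced form
  \<open>a\<^sub>i\<^sup>c\<^sub>0 y\<^sub>p\<^sub>1 a\<^sub>p\<^sub>1\<^sup>c\<^sub>1 \<cdots> y\<^sub>p\<^sub>r a\<^sub>p\<^sub>r\<^sup>c\<^sub>r\<close> on a stack: the next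
  letter \<open>y\<^sub>q\<close> either forms a pinch with the top segment, which then collapses into the segment
  below, or is pushed. A pinch occurs exactly when \<open>p\<^sub>r \<sim>\<^sub>\<C> q\<close>, as both conditions say that
  \<open>\<rho>\<close> and the weighted exponent sum of the pinched subword vanish modulo the edge group. Hence the
  positions on the stack evolve like the free reduction of \<open>\<C>(w\<^sub>i\<^sub>,\<^sub>j)\<close> in
  \<open>F\<^sub>\<Lambda>\<close>, in which \<open>[p]\<close> and \<open>[q]\<close> cancel precisely when \<open>p \<sim>\<^sub>\<C> q\<close>.
  Britton's lemma, proved through an action of \<open>F(\<G>)\<close> on normal forms, shows that the word
  lies in \<open>\<langle>a\<^sub>i\<rangle>\<close> iff only the bottom segment is left, i.e. iff
  \<open>\<C>(w\<^sub>i\<^sub>,\<^sub>j)\<close> freely reduces to \<open>1\<close>.\<close>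

section \<open>Words in presented groups\<close>

declare pres_eq.pe_trans [trans]

lemma pres_eq_append_cong: "pres_eq R u v \<Longrightarrow> pres_eq R (x @ u @ z) (x @ v @ z)"
proof (induction rule: pres_eq.induct)
  case (pe_cancel u c b v)
  show ?case using pres_eq.pe_cancel[of R "x @ u" c b "v @ z"] by simp
next
  case (pe_rel r u v)
  show ?case using pres_eq.pe_rel[OF pe_rel, of "x @ u" "v @ z"] by simp
qed (auto intro: pres_eq.intros)

lemma pres_eq_append_left: "pres_eq R u v \<Longrightarrow> pres_eq R (x @ u) (x @ v)"
  using pres_eq_append_cong[of R u v x "[]"] by simp

lemma pres_eq_append_right: "pres_eq R u v \<Longrightarrow> pres_eq R (u @ z) (v @ z)"
  using pres_eq_append_cong[of R u v "[]" z] by simp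

lemma pres_eq_append: "pres_eq R u v \<Longrightarrow> pres_eq R u' v' \<Longrightarrow> pres_eq R (u @ u') (v @ v')"
  by (meson pres_eq_append_left pres_eq_append_right pres_eq.pe_trans)

lemma pres_eq_relator: "r \<in> R \<Longrightarrow> pres_eq R r []"
  using pres_eq.pe_rel[of r R "[]" "[]"] by simp

lemma gpow_0 [simp]: "gpow g 0 = []"
  by (simp add: gpow_def)

lemma gpow_plus_1: "m \<ge> 0 \<Longrightarrow> gpow g (m + 1) = (g, True) # gpow g m"
  by (simp add: gpow_def nat_add_distrib)

lemma gpow_minus_1: "m \<le> 0 \<Longrightarrow> gpow g (m - 1) = (g, False) # gpow g m"
proof -
  assume "m \<le> 0"
  then have "nat \<bar>m - 1\<bar> = Suc (nat \<bar>m\<bar>)" by simp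
  with \<open>m \<le> 0\<close> show ?thesis by (simp add: gpow_def)
qed

lemma pres_eq_Cons_gpow_True: "pres_eq R ((g, True) # gpow g m) (gpow g (m + 1))"
proof (cases "m \<ge> 0")
  case True
  then show ?thesis by (simp add: gpow_plus_1 pres_eq.pe_refl)
next
  case False
  then have "gpow g m = (g, False) # gpow g (m + 1)"
    using gpow_minus_1[of "m + 1" g] by simp
  then show ?thesis using pres_eq.pe_cancel[of R "[]" g True "gpow g (m + 1)"] by simp
qed

lemma pres_eq_Cons_gpow_False: "pres_eq R ((g, False) # gpow g m) (gpow g (m - 1))"
proof (cases "m \<le> 0")
  case True
  then show ?thesis by (simp add: gpow_minus_1 pres_eq.pe_refl)
next
  case False
  then have "gpow g m = (g, True) # gpow g (m - 1)"
    using gpow_plus_1[of "m - 1" g] by simp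
  then show ?thesis using pres_eq.pe_cancel[of R "[]" g False "gpow g (m - 1)"] by simp
qed

lemma gpow_add: "pres_eq R (gpow g m @ gpow g m') (gpow g (m + m'))"
proof (induction m rule: int_induct[where k = 0])
  case base
  show ?case by (simp add: pres_eq.pe_refl)
next
  case (step1 m)
  have "gpow g (m + 1) @ gpow g m' = (g, True) # gpow g m @ gpow g m'"
    using step1(1) by (simp add: gpow_plus_1)
  also have "pres_eq R \<dots> ((g, True) # gpow g (m + m'))"
    using pres_eq_append_left[OF step1(2), of "[(g, True)]"] by simp
  also have "pres_eq R \<dots> (gpow g (m + 1 + m'))"
    using pres_eq_Cons_gpow_True[of R g "m + m'"] by (simp add: ac_simps)
  finally show ?case .
next
  case (step2 m)
  have "gpow g (m - 1) @ gpow g m' = (g, False) # gpow g m @ gpow g m'"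
    using step2(1) by (simp add: gpow_minus_1)
  also have "pres_eq R \<dots> ((g, False) # gpow g (m + m'))"
    using pres_eq_append_left[OF step2(2), of "[(g, False)]"] by simp
  also have "pres_eq R \<dots> (gpow g (m - 1 + m'))"
    using pres_eq_Cons_gpow_False[of R g "m + m'"] by (simp add: algebra_simps)
  finally show ?case .
qed

lemma gpow_add_inverse: "pres_eq R (gpow g m @ gpow g (- m)) []"
  using gpow_add[of R g m "- m"] by simp

fun push_letter :: "'x \<times> bool \<Rightarrow> ('x \<times> bool) list \<Rightarrow> ('x \<times> bool) list" where
  "push_letter x [] = [x]"
| "push_letter x (z # zs) = (if fst z = fst x \<and> snd z \<noteq> snd x then zs else x # z # zs)"

fun freely_reduced :: "('x \<times> bool) list \<Rightarrow> bool" where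
  "freely_reduced (x # z # zs) \<longleftrightarrow> \<not> (fst z = fst x \<and> snd z \<noteq> snd x) \<and> freely_reduced (z # zs)"
| "freely_reduced _ \<longleftrightarrow> True"

lemma freely_reduced_tl: "freely_reduced (z # zs) \<Longrightarrow> freely_reduced zs"
  by (cases zs) auto

lemma freely_reduced_fold_push: "freely_reduced s \<Longrightarrow> freely_reduced (fold push_letter u s)"
proof (induction u arbitrary: s)
  case (Cons x u)
  have "freely_reduced (push_letter x s)"
    using Cons.prems by (cases s) (auto dest: freely_reduced_tl)
  then show ?case using Cons.IH by simp
qed simp

lemma push_letter_inverse_pair:
  assumes "freely_reduced s"
  shows "push_letter (c, \<not> b) (push_letter (c, b) s) = s"
proof (cases s)
  case (Cons z zs)
  show ?thesis
  proof (cases "z = (c, \<not> b)")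
    case True
    then have "push_letter (c, \<not> b) zs = (c, \<not> b) # zs"
      using assms Cons by (cases zs) auto
    then show ?thesis using Cons True by simp
  qed (use Cons in \<open>cases z; auto\<close>)
qed simp

lemma fold_push_eq_if_pres_eq_free:
  "pres_eq {} u v \<Longrightarrow> fold push_letter u [] = fold push_letter v []"
proof (induction rule: pres_eq.induct)
  case (pe_cancel u c b v)
  have "freely_reduced (fold push_letter u [])"
    by (rule freely_reduced_fold_push) simp
  then show ?case by (simp add: push_letter_inverse_pair)
qed auto

lemma pres_eq_fold_push: "pres_eq R (rev s @ u) (rev (fold push_letter u s))"
proof (induction u arbitrary: s)
  case (Cons x u)
  have "pres_eq R (rev s @ x # u) (rev (push_letter x s) @ u)"
  proof (cases "s \<noteq> [] \<and> fst (hd s) = fst x \<and> snd (hd s) \<noteq> snd x")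
    case True
    then obtain zs where "s = (fst x, \<not> snd x) # zs" by (cases s; cases x) auto
    then show ?thesis using pres_eq.pe_cancel[of R "rev zs" "fst x" "\<not> snd x" u] by simp
  next
    case False
    then show ?thesis by (cases s) (auto simp: pres_eq.pe_refl)
  qed
  then show ?case using Cons.IH[of "push_letter x s"] by (auto intro: pres_eq.pe_trans)
qed (simp add: pres_eq.pe_refl)

lemma pres_eq_free_Nil_iff: "pres_eq {} u [] \<longleftrightarrow> fold push_letter u [] = []"
  using fold_push_eq_if_pres_eq_free[of u "[]"] pres_eq_fold_push[of "{}" "[]" u] by auto


section \<open>Normal forms in \<open>F(\<G>)\<close> and Britton's lemma\<close>

locale gbs =
  fixes V :: "'v set" and E :: "'e set" and \<iota> \<tau> :: "'e \<Rightarrow> 'v" and ebar :: "'e \<Rightarrow> 'e"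
    and \<alpha> \<beta> :: "'e \<Rightarrow> int"
  assumes gbs_graph: "gbs_graph V E \<iota> \<tau> ebar \<alpha> \<beta>"
begin

lemma ebar_in_E: "e \<in> E \<Longrightarrow> ebar e \<in> E"
  and ebar_ebar [simp]: "e \<in> E \<Longrightarrow> ebar (ebar e) = e"
  and ebar_neq: "e \<in> E \<Longrightarrow> ebar e \<noteq> e"
  and iota_ebar: "e \<in> E \<Longrightarrow> \<iota> (ebar e) = \<tau> e"
  and alpha_nonzero: "e \<in> E \<Longrightarrow> \<alpha> e \<noteq> 0"
  and beta_nonzero: "e \<in> E \<Longrightarrow> \<beta> e \<noteq> 0"
  and beta_ebar: "e \<in> E \<Longrightarrow> \<beta> (ebar e) = \<alpha> e"
  using gbs_graph by (auto simp: gbs_graph_def)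

lemma tau_ebar: "e \<in> E \<Longrightarrow> \<tau> (ebar e) = \<iota> e"
  using iota_ebar[OF ebar_in_E] by simp

lemma alpha_ebar: "e \<in> E \<Longrightarrow> \<alpha> (ebar e) = \<beta> e"
  using beta_ebar[OF ebar_in_E] by simp

abbreviation relators :: "(('v + 'e) \<times> bool) list set" where
  "relators \<equiv> gbs_relators E \<iota> \<tau> ebar \<alpha> \<beta>"

text \<open>A state \<open>(v, h, [(e\<^sub>1, c\<^sub>1), \<dots>, (e\<^sub>m, c\<^sub>m)])\<close> stands for
  \<open>v\<^sup>h e\<^sub>1 (\<tau> e\<^sub>1)\<^sup>c\<^sub>1 \<cdots> e\<^sub>m (\<tau> e\<^sub>m)\<^sup>c\<^sub>m\<close> with each \<open>c\<^sub>i\<close> a residue modulo \<open>\<beta> e\<^sub>i\<close>.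
  Left multiplication by \<open>e\<close> uses the relation \<open>e (\<tau> e)\<^bsup>\<beta> e\<^esup> = (\<iota> e)\<^bsup>\<alpha> e\<^esup> e\<close> and
  cancels an adjacent \<open>ebar e\<close> whenever the power of \<open>\<tau> e\<close> in between becomes trivial.\<close>

type_synonym ('a, 'b) state = "'a \<times> int \<times> ('b \<times> int) list"

definition edge_step :: "'e \<Rightarrow> ('v, 'e) state \<Rightarrow> ('v, 'e) state" where
  "edge_step e x = (case x of (v, h, t) \<Rightarrow>
     (if h mod \<beta> e = 0 \<and> t \<noteq> [] \<and> fst (hd t) = ebar e
      then (\<iota> e, (h div \<beta> e) * \<alpha> e + snd (hd t), tl t)
      else (\<iota> e, (h div \<beta> e) * \<alpha> e, (e, h mod \<beta> e) # t)))"

fun nf_tail :: "'v \<Rightarrow> ('e \<times> int) list \<Rightarrow> bool" where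
  "nf_tail v [] \<longleftrightarrow> True"
| "nf_tail v ((e, c) # t) \<longleftrightarrow> e \<in> E \<and> \<iota> e = v \<and> c mod \<beta> e = c \<and> nf_tail (\<tau> e) t \<and>
      (t \<noteq> [] \<longrightarrow> \<not> (fst (hd t) = ebar e \<and> c = 0))"

fun normal_form :: "('v, 'e) state \<Rightarrow> bool" where
  "normal_form (v, h, t) \<longleftrightarrow> nf_tail v t"

lemma edge_step_cancel:
  "h mod \<beta> e = 0 \<Longrightarrow> edge_step e (v, h, (ebar e, c) # t) = (\<iota> e, (h div \<beta> e) * \<alpha> e + c, t)"
  by (simp add: edge_step_def)

lemma edge_step_push:
  assumes "\<not> (h mod \<beta> e = 0 \<and> t \<noteq> [] \<and> fst (hd t) = ebar e)"
  shows "edge_step e (v, h, t) = (\<iota> e, (h div \<beta> e) * \<alpha> e, (e, h mod \<beta> e) # t)"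
  unfolding edge_step_def prod.case using assms by (rule if_not_P)

lemma fst_edge_step [simp]: "fst (edge_step e x) = \<iota> e"
  by (simp add: edge_step_def split: prod.splits)

lemma normal_form_edge_step:
  assumes e: "e \<in> E" and t: "nf_tail (\<tau> e) t"
  shows "normal_form (edge_step e (\<tau> e, h, t))"
proof (cases "h mod \<beta> e = 0 \<and> t \<noteq> [] \<and> fst (hd t) = ebar e")
  case True
  then obtain c t' where "t = (ebar e, c) # t'" by (cases t) auto
  then show ?thesis using t True e by (simp add: edge_step_cancel tau_ebar)
next
  case False
  then show ?thesis using t e by (auto simp: edge_step_push)
qed

lemma div_mod_residue:
  fixes b c q :: int
  assumes "b \<noteq> 0" "c mod b = c"
  shows "(q * b + c) div b = q" "(q * b + c) mod b = c"
proof -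
  have "c div b = 0"
    using assms by (metis add_cancel_right_left div_mult_mod_eq mult_eq_0_iff)
  then show "(q * b + c) div b = q" "(q * b + c) mod b = c"
    using assms by (simp_all add: add.commute)
qed

lemma edge_step_ebar_edge_step:
  assumes e: "e \<in> E" and t: "nf_tail (\<tau> e) t"
  shows "edge_step (ebar e) (edge_step e (\<tau> e, h, t)) = (\<tau> e, h, t)"
proof (cases "h mod \<beta> e = 0 \<and> t \<noteq> [] \<and> fst (hd t) = ebar e")
  case True
  then obtain c t' where t_eq: "t = (ebar e, c) # t'" by (cases t) auto
  let ?h' = "h div \<beta> e * \<alpha> e + c"
  have c: "c mod \<alpha> e = c" and no_back: "\<not> (t' \<noteq> [] \<and> fst (hd t') = e \<and> c = 0)"
    using t t_eq e by (auto simp: beta_ebar)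
  have dm: "?h' div \<alpha> e = h div \<beta> e" "?h' mod \<alpha> e = c"
    using div_mod_residue[OF alpha_nonzero[OF e] c] by simp_all
  have "edge_step e (\<tau> e, h, t) = (\<iota> e, ?h', t')"
    using True t_eq by (simp add: edge_step_cancel)
  moreover have "\<not> (?h' mod \<beta> (ebar e) = 0 \<and> t' \<noteq> [] \<and> fst (hd t') = ebar (ebar e))"
    using no_back dm e by (auto simp: beta_ebar)
  then have "edge_step (ebar e) (\<iota> e, ?h', t') = (\<tau> e, h div \<beta> e * \<beta> e, (ebar e, c) # t')"
    using dm e by (simp add: edge_step_push beta_ebar alpha_ebar iota_ebar)
  moreover have "h div \<beta> e * \<beta> e = h"
    using True by (metis add.right_neutral mult_div_mod_eq mult.commute)
  ultimately show ?thesis using t_eq by simp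
next
  case False
  then have "edge_step e (\<tau> e, h, t) = (\<iota> e, h div \<beta> e * \<alpha> e, (e, h mod \<beta> e) # t)"
    by (rule edge_step_push)
  moreover have "h div \<beta> e * \<beta> e + h mod \<beta> e = h" by simp
  ultimately show ?thesis
    using e alpha_nonzero[OF e]
    by (simp add: edge_step_def beta_ebar alpha_ebar iota_ebar)
qed

lemma edge_step_shift:
  assumes "e \<in> E"
  shows "edge_step e (v, h + \<beta> e * m, t) =
    (case edge_step e (v, h, t) of (v', h', t') \<Rightarrow> (v', h' + \<alpha> e * m, t'))"
proof -
  have "(h + \<beta> e * m) div \<beta> e = h div \<beta> e + m"
    using beta_nonzero[OF assms] by (simp add: mult.commute)
  then show ?thesis by (simp add: edge_step_def algebra_simps)
qed

text \<open>An edge \<open>e\<close> acts by \<open>edge_step\<close> on states based at \<open>\<tau> e\<close>, by its inverse on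
  states based at \<open>\<iota> e\<close>, and trivially elsewhere; this is a permutation of the normal forms
  satisfying all relators.\<close>

definition edge_act :: "'e \<Rightarrow> ('v, 'e) state \<Rightarrow> ('v, 'e) state" where
  "edge_act e x =
    (if e \<in> E \<and> fst x = \<tau> e then edge_step e x
     else if e \<in> E \<and> fst x = \<iota> e then edge_step (ebar e) x else x)"

fun letter_act :: "('v + 'e) \<times> bool \<Rightarrow> ('v, 'e) state \<Rightarrow> ('v, 'e) state" where
  "letter_act (Inl u, b) (v, h, t) =
    (if v = u then (v, h + (if b then 1 else -1), t) else (v, h, t))"
| "letter_act (Inr e, b) x = (if b then edge_act e x else if e \<in> E then edge_act (ebar e) x else x)"

definition word_act :: "(('v + 'e) \<times> bool) list \<Rightarrow> ('v, 'e) state \<Rightarrow> ('v, 'e) state" where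
  "word_act u x = foldr letter_act u x"

lemma word_act_Nil [simp]: "word_act [] x = x"
  and word_act_Cons [simp]: "word_act (g # u) x = letter_act g (word_act u x)"
  and word_act_append [simp]: "word_act (u @ w) x = word_act u (word_act w x)"
  by (simp_all add: word_act_def)

lemma normal_form_edge_act:
  assumes "normal_form x"
  shows "normal_form (edge_act e x)"
proof -
  obtain v h t where x: "x = (v, h, t)" by (cases x)
  consider "e \<in> E" "v = \<tau> e" | "e \<in> E" "v \<noteq> \<tau> e" "v = \<iota> e" | "e \<notin> E \<or> (v \<noteq> \<tau> e \<and> v \<noteq> \<iota> e)"
    by blast
  then show ?thesis
  proof cases
    case 2
    then have "edge_act e x = edge_step (ebar e) (\<tau> (ebar e), h, t)"
      using x by (simp add: edge_act_def tau_ebar)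
    then show ?thesis using normal_form_edge_step[OF ebar_in_E] 2 assms x by (simp add: tau_ebar)
  qed (use assms x normal_form_edge_step in \<open>auto simp: edge_act_def\<close>)
qed

lemma normal_form_word_act: "normal_form x \<Longrightarrow> normal_form (word_act u x)"
proof (induction u)
  case (Cons g u)
  obtain c b where "g = (c, b)" by (cases g)
  with Cons show ?case
    by (cases c; cases "word_act u x") (auto simp: normal_form_edge_act)
qed simp

lemma edge_act_ebar_edge_act:
  assumes e: "e \<in> E" and x: "normal_form x"
  shows "edge_act (ebar e) (edge_act e x) = x"
proof -
  obtain v h t where x_eq: "x = (v, h, t)" by (cases x)
  have ee: "ebar e \<in> E" using ebar_in_E[OF e] .
  consider "v = \<tau> e" | "v \<noteq> \<tau> e" "v = \<iota> e" | "v \<noteq> \<tau> e" "v \<noteq> \<iota> e" by blast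
  then show ?thesis
  proof cases
    case 1
    then show ?thesis
      using edge_step_ebar_edge_step[OF e] x x_eq e ee by (simp add: edge_act_def tau_ebar)
  next
    case 2
    then have "edge_step e (edge_step (ebar e) x) = x"
      using edge_step_ebar_edge_step[OF ee] x x_eq e by (simp add: tau_ebar)
    then show ?thesis using 2 x_eq e ee by (simp add: edge_act_def tau_ebar iota_ebar)
  qed (use x_eq e ee in \<open>simp add: edge_act_def tau_ebar iota_ebar\<close>)
qed

lemma letter_act_inverse_pair:
  assumes "normal_form x"
  shows "letter_act (c, b) (letter_act (c, \<not> b) x) = x"
proof (cases c)
  case (Inl u)
  then show ?thesis by (cases x) auto
next
  case (Inr e)
  show ?thesis
  proof (cases "e \<in> E")
    case True
    then show ?thesis
      using Inr assms edge_act_ebar_edge_act[OF True] edge_act_ebar_edge_act[OF ebar_in_E[OF True]]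
        normal_form_edge_act
      by (cases b) auto
  qed (use Inr in \<open>simp add: edge_act_def\<close>)
qed

lemma word_act_gpow:
  "word_act (gpow (Inl u) m) (v, h, t) = (if v = u then (v, h + m, t) else (v, h, t))"
proof -
  have "word_act (replicate d (Inl u, b)) (v, h, t) =
      (if v = u then (v, h + (if b then int d else - int d), t) else (v, h, t))" for d b
    by (induction d) auto
  then show ?thesis by (simp add: gpow_def)
qed

lemma word_act_edge_cancel:
  assumes "e \<in> E" "normal_form x"
  shows "word_act [(Inr (ebar e), True), (Inr e, True)] x = x"
  using edge_act_ebar_edge_act[OF assms] by simp

lemma word_act_edge_relation:
  assumes e: "e \<in> E" and x: "normal_form x"
  shows "word_act ([(Inr e, True)] @ gpow (Inl (\<tau> e)) (\<beta> e) @ [(Inr (ebar e), True)] @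
    gpow (Inl (\<iota> e)) (- \<alpha> e)) x = x"
proof -
  obtain v h t where x_eq: "x = (v, h, t)" by (cases x)
  have ee: "ebar e \<in> E" using ebar_in_E[OF e] .
  show ?thesis
  proof (cases "v = \<iota> e")
    case True
    obtain v1 h1 t1 where step: "edge_step (ebar e) (\<iota> e, h, t) = (v1, h1, t1)"
      by (cases "edge_step (ebar e) (\<iota> e, h, t)")
    have v1: "v1 = \<tau> e"
      using fst_edge_step[of "ebar e" "(\<iota> e, h, t)"] step e by (simp add: iota_ebar)
    have "edge_step (ebar e) (\<iota> e, h - \<alpha> e, t) = (\<tau> e, h1 - \<beta> e, t1)"
      using edge_step_shift[OF ee, of "\<iota> e" h "-1" t] step e v1 by (simp add: beta_ebar alpha_ebar)
    moreover have "edge_step e (\<tau> e, h1, t1) = (\<iota> e, h, t)"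
      using edge_step_ebar_edge_step[OF ee, of t h] x x_eq True step v1 e by (simp add: tau_ebar)
    ultimately show ?thesis
      using x_eq True e ee by (simp add: word_act_gpow edge_act_def tau_ebar)
  next
    case False
    show ?thesis
    proof (cases "v = \<tau> e")
      case True
      obtain v1 h1 t1 where step: "edge_step e (\<tau> e, h, t) = (v1, h1, t1)"
        by (cases "edge_step e (\<tau> e, h, t)")
      have "v1 = \<iota> e" using fst_edge_step[of e "(\<tau> e, h, t)"] step by simp
      moreover have "edge_step (ebar e) (v1, h1, t1) = (\<tau> e, h, t)"
        using edge_step_ebar_edge_step[OF e, of t h] x x_eq True step by simp
      ultimately show ?thesis
        using x_eq True False step e ee by (simp add: word_act_gpow edge_act_def tau_ebar iota_ebar)
    qed (use x_eq False e ee in \<open>simp add: word_act_gpow edge_act_def tau_ebar iota_ebar\<close>)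
  qed
qed

lemma word_act_relator:
  assumes "r \<in> relators" "normal_form x"
  shows "word_act r x = x"
  using assms(1) word_act_edge_cancel[OF _ assms(2)] word_act_edge_relation[OF _ assms(2)]
  unfolding gbs_relators_def by blast

lemma word_act_pres_eq:
  "pres_eq relators u w \<Longrightarrow> normal_form x \<Longrightarrow> word_act u x = word_act w x"
proof (induction arbitrary: x rule: pres_eq.induct)
  case (pe_cancel u c b v)
  then show ?case
    using letter_act_inverse_pair[of "word_act v x" c b] normal_form_word_act by simp
next
  case (pe_rel r u v)
  then show ?case using word_act_relator normal_form_word_act by simp
qed auto

definition edge_word :: "('e \<times> int) list \<Rightarrow> (('v + 'e) \<times> bool) list" where
  "edge_word L = concat (map (\<lambda>(e, c). [(Inr e, True)] @ gpow (Inl (\<tau> e)) c) L)"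

lemma edge_word_Cons: "edge_word ((e, c) # L) = [(Inr e, True)] @ gpow (Inl (\<tau> e)) c @ edge_word L"
  and edge_word_append: "edge_word (L @ M) = edge_word L @ edge_word M"
  by (simp_all add: edge_word_def)

fun reduced_path :: "('e \<times> int) list \<Rightarrow> bool" where
  "reduced_path [] \<longleftrightarrow> True"
| "reduced_path [(e, c)] \<longleftrightarrow> e \<in> E"
| "reduced_path ((e, c) # (e', c') # L) \<longleftrightarrow>
     e \<in> E \<and> \<tau> e = \<iota> e' \<and> \<not> (e' = ebar e \<and> \<beta> e dvd c) \<and> reduced_path ((e', c') # L)"

lemma reduced_path_snoc:
  "reduced_path L \<Longrightarrow> e \<in> E \<Longrightarrow>
    (L \<noteq> [] \<longrightarrow> \<tau> (fst (last L)) = \<iota> e \<and>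
      \<not> (e = ebar (fst (last L)) \<and> \<beta> (fst (last L)) dvd snd (last L)))
   \<Longrightarrow> reduced_path (L @ [(e, c)])"
  by (induction L rule: reduced_path.induct) auto

text \<open>The divisibility invariant is what prevents the next edge from cancelling.\<close>

lemma word_act_reduced_path:
  assumes "reduced_path L" "L \<noteq> []"
  shows "\<exists>H r t.
    word_act (edge_word L) (\<tau> (fst (last L)), 0, []) = (\<iota> (fst (hd L)), H, (fst (hd L), r) # t)
     \<and> \<alpha> (fst (hd L)) dvd H \<and> normal_form (word_act (edge_word L) (\<tau> (fst (last L)), 0, []))"
  using assms
proof (induction L rule: reduced_path.induct)
  case (2 e c)
  then have "word_act (edge_word [(e, c)]) (\<tau> e, 0, []) = edge_step e (\<tau> e, c, [])"
    by (simp add: edge_word_def word_act_gpow edge_act_def)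
  moreover have "normal_form (edge_step e (\<tau> e, c, []))"
    using normal_form_edge_step 2 by simp
  ultimately show ?case by (simp add: edge_step_def)
next
  case (3 e c e' c' L)
  let ?L = "(e', c') # L" and ?x = "(\<tau> (fst (last ((e', c') # L))), 0, [])"
  have e: "e \<in> E" and tau_e: "\<tau> e = \<iota> e'" and no_pinch: "\<not> (e' = ebar e \<and> \<beta> e dvd c)"
    using "3.prems" by auto
  obtain H r t where IH: "word_act (edge_word ?L) ?x = (\<iota> e', H, (e', r) # t)"
    "\<alpha> e' dvd H" "normal_form (word_act (edge_word ?L) ?x)"
    using 3 by auto
  have no_cancel: "\<not> ((H + c) mod \<beta> e = 0 \<and> e' = ebar e)"
  proof
    assume *: "(H + c) mod \<beta> e = 0 \<and> e' = ebar e"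
    then have "\<beta> e dvd H" using IH(2) alpha_ebar e by simp
    moreover have "\<beta> e dvd H + c" using * by (simp add: dvd_eq_mod_eq_0)
    ultimately show False using * no_pinch by (simp add: dvd_add_right_iff)
  qed
  have "word_act (edge_word ((e, c) # ?L)) ?x = edge_step e (\<tau> e, H + c, (e', r) # t)"
    using IH(1) tau_e e by (simp add: edge_word_Cons word_act_gpow edge_act_def)
  moreover have "normal_form (edge_step e (\<tau> e, H + c, (e', r) # t))"
    using normal_form_edge_step[OF e] IH tau_e by simp
  ultimately show ?case using no_cancel by (auto simp: edge_step_def)
qed simp

theorem britton:
  assumes "reduced_path L" "L \<noteq> []"
  shows "\<not> pres_eq relators (gpow (Inl u) c @ edge_word L) (gpow (Inl u) m)"
proof
  let ?x = "(\<tau> (fst (last L)), 0, []) :: ('v, 'e) state"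
  assume "pres_eq relators (gpow (Inl u) c @ edge_word L) (gpow (Inl u) m)"
  then have "word_act (gpow (Inl u) c @ edge_word L) ?x = word_act (gpow (Inl u) m) ?x"
    by (rule word_act_pres_eq) simp
  then show False
    using word_act_reduced_path[OF assms] by (auto simp: word_act_gpow split: if_splits)
qed

end


section \<open>Collapsing pinches\<close>

context gbs
begin

definition conj_word :: "'e \<Rightarrow> int \<Rightarrow> (('v + 'e) \<times> bool) list" where
  "conj_word e x = [(Inr e, True)] @ gpow (Inl (\<tau> e)) x @ [(Inr (ebar e), True)]"

lemma pres_eq_append_relator: "r \<in> relators \<Longrightarrow> pres_eq relators u (u @ r)"
  using pres_eq.pe_rel[of r relators u "[]"] by (simp add: pres_eq.pe_sym)

lemma conj_word_add:
  assumes e: "e \<in> E"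
  shows "pres_eq relators (conj_word e x @ conj_word e x') (conj_word e (x + x'))"
proof -
  let ?g = "gpow (Inl (\<tau> e))"
  have "[(Inr (ebar e), True), (Inr e, True)] \<in> relators"
    using e unfolding gbs_relators_def by blast
  from pres_eq.pe_rel[OF this, of "[(Inr e, True)] @ ?g x" "?g x' @ [(Inr (ebar e), True)]"]
  have "pres_eq relators (conj_word e x @ conj_word e x')
      ([(Inr e, True)] @ (?g x @ ?g x') @ [(Inr (ebar e), True)])"
    by (simp add: conj_word_def)
  also have "pres_eq relators \<dots> (conj_word e (x + x'))"
    unfolding conj_word_def by (rule pres_eq_append_cong[OF gpow_add])
  finally show ?thesis .
qed

lemma edge_relator_in_relators:
  "e \<in> E \<Longrightarrow> conj_word e (\<beta> e) @ gpow (Inl (\<iota> e)) (- \<alpha> e) \<in> relators"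
  unfolding gbs_relators_def conj_word_def by (intro UnI2 CollectI exI[of _ e]) simp

lemma conj_word_beta:
  assumes "e \<in> E"
  shows "pres_eq relators (conj_word e (\<beta> e)) (gpow (Inl (\<iota> e)) (\<alpha> e))"
proof -
  have "pres_eq relators (conj_word e (\<beta> e))
      ((conj_word e (\<beta> e) @ gpow (Inl (\<iota> e)) (- \<alpha> e)) @ gpow (Inl (\<iota> e)) (\<alpha> e))"
    using pres_eq.pe_sym[OF pres_eq_append_left[OF gpow_add_inverse[of relators _ "- \<alpha> e"]]]
    by simp
  also have "pres_eq relators \<dots> (gpow (Inl (\<iota> e)) (\<alpha> e))"
    using pres_eq_append_right[OF pres_eq_relator[OF edge_relator_in_relators[OF assms]]] by simp
  finally show ?thesis .
qed

lemma conj_word_beta_mult: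
  assumes e: "e \<in> E"
  shows "pres_eq relators (conj_word e (\<beta> e * m)) (gpow (Inl (\<iota> e)) (\<alpha> e * m))"
proof (induction m rule: int_induct[where k = 0])
  case base
  have "[(Inr (ebar (ebar e)), True), (Inr (ebar e), True)] \<in> relators"
    using ebar_in_E[OF e] unfolding gbs_relators_def by blast
  then show ?case using e by (simp add: conj_word_def pres_eq_relator)
next
  case (step1 m)
  have "pres_eq relators (conj_word e (\<beta> e * (m + 1))) (conj_word e (\<beta> e * m) @ conj_word e (\<beta> e))"
    using pres_eq.pe_sym[OF conj_word_add[OF e, of "\<beta> e * m" "\<beta> e"]] by (simp add: algebra_simps)
  also have "pres_eq relators \<dots> (gpow (Inl (\<iota> e)) (\<alpha> e * m) @ gpow (Inl (\<iota> e)) (\<alpha> e))"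
    by (rule pres_eq_append[OF step1(2) conj_word_beta[OF e]])
  also have "pres_eq relators \<dots> (gpow (Inl (\<iota> e)) (\<alpha> e * (m + 1)))"
    using gpow_add[of relators "Inl (\<iota> e)" "\<alpha> e * m" "\<alpha> e"] by (simp add: algebra_simps)
  finally show ?case .
next
  case (step2 m)
  have "pres_eq relators (conj_word e (\<beta> e * (m - 1)))
      (conj_word e (\<beta> e * (m - 1)) @ conj_word e (\<beta> e) @ gpow (Inl (\<iota> e)) (- \<alpha> e))"
    using pres_eq_append_relator[OF edge_relator_in_relators[OF e]] by simp
  also have "pres_eq relators \<dots> (conj_word e (\<beta> e * m) @ gpow (Inl (\<iota> e)) (- \<alpha> e))"
    using pres_eq_append_right[OF conj_word_add[OF e, of "\<beta> e * (m - 1)" "\<beta> e"]]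
    by (simp add: algebra_simps)
  also have "pres_eq relators \<dots> (gpow (Inl (\<iota> e)) (\<alpha> e * m) @ gpow (Inl (\<iota> e)) (- \<alpha> e))"
    by (rule pres_eq_append_right[OF step2(2)])
  also have "pres_eq relators \<dots> (gpow (Inl (\<iota> e)) (\<alpha> e * (m - 1)))"
    using gpow_add[of relators "Inl (\<iota> e)" "\<alpha> e * m" "- \<alpha> e"] by (simp add: algebra_simps)
  finally show ?case .
qed

lemma pinch_collapse:
  assumes "e \<in> E"
  shows "pres_eq relators
    (gpow (Inl (\<iota> e)) c @ [(Inr e, True)] @ gpow (Inl (\<tau> e)) (\<beta> e * m) @ [(Inr (ebar e), True)] @
      gpow (Inl (\<iota> e)) c')
    (gpow (Inl (\<iota> e)) (c + \<alpha> e * m + c'))"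
proof -
  let ?g = "gpow (Inl (\<iota> e))"
  have "pres_eq relators (?g c @ conj_word e (\<beta> e * m) @ ?g c') (?g c @ ?g (\<alpha> e * m) @ ?g c')"
    by (rule pres_eq_append_cong[OF conj_word_beta_mult[OF assms]])
  also have "pres_eq relators \<dots> (?g c @ ?g (\<alpha> e * m + c'))"
    by (rule pres_eq_append_left[OF gpow_add])
  also have "pres_eq relators \<dots> (?g (c + \<alpha> e * m + c'))"
    using gpow_add[of relators "Inl (\<iota> e)" c "\<alpha> e * m + c'"] by (simp add: add.assoc)
  finally show ?thesis by (simp add: conj_word_def)
qed

end


section \<open>Exponent data of a factorization\<close>

locale factorized_word = gbs V E \<iota> \<tau> ebar \<alpha> \<beta>
  for V :: "'v set" and E :: "'e set" and \<iota> \<tau> :: "'e \<Rightarrow> 'v" and ebar :: "'e \<Rightarrow> 'e"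
    and \<alpha> \<beta> :: "'e \<Rightarrow> int" +
  fixes n :: nat and a :: "nat \<Rightarrow> 'v" and y :: "nat \<Rightarrow> 'e" and k :: "nat \<Rightarrow> int" and D :: "'e set"
  assumes factorization: "gbs_factorization V E \<iota> \<tau> n a y"
    and orientation: "orientation E ebar D"
begin

lemma y_in_E: "p \<in> {1..n} \<Longrightarrow> y p \<in> E"
  and iota_y: "p \<in> {1..n} \<Longrightarrow> \<iota> (y p) = a (p - 1)"
  and tau_y: "p \<in> {1..n} \<Longrightarrow> \<tau> (y p) = a p"
  using factorization by (auto simp: gbs_factorization_def)

lemma D_subset_E: "D \<subseteq> E"
  and in_D_iff_ebar_notin_D: "e \<in> E \<Longrightarrow> e \<in> D \<longleftrightarrow> ebar e \<notin> D"
  using orientation by (auto simp: orientation_def)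

lemma finite_D: "finite D"
  using gbs_graph D_subset_E finite_subset by (auto simp: gbs_graph_def)

abbreviation sim :: "nat \<Rightarrow> nat \<Rightarrow> bool" where
  "sim p q \<equiv> simC n ebar \<alpha> \<beta> D y k p q"

definition rho_letter :: "'e \<Rightarrow> 'e \<Rightarrow> int" where
  "rho_letter e d = (if e = d then 1 else 0) - (if e = ebar d then 1 else 0)"

definition rho_prefix :: "nat \<Rightarrow> 'e \<Rightarrow> int" where
  "rho_prefix p d = rho ebar y 0 p d"

lemma rho_prefix_Suc: "rho_prefix (Suc p) d = rho_prefix p d + rho_letter (y (Suc p)) d"
  by (simp add: rho_prefix_def rho_def rho_letter_def)

lemma rho_eq_diff: "i \<le> j \<Longrightarrow> rho ebar y i j d = rho_prefix j d - rho_prefix i d"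
proof (induction j rule: dec_induct)
  case (step m)
  then show ?case by (simp add: rho_def rho_prefix_Suc rho_letter_def)
qed (simp add: rho_def)

lemma rho_letter_ebar:
  assumes "e \<in> E" "d \<in> E"
  shows "rho_letter (ebar e) d = - rho_letter e d"
proof -
  have "ebar e = d \<longleftrightarrow> e = ebar d" "ebar e = ebar d \<longleftrightarrow> e = d"
    using assms ebar_ebar by metis+
  then show ?thesis by (simp add: rho_letter_def)
qed

definition ratio :: "'e \<Rightarrow> rat" where
  "ratio e = of_int (\<alpha> e) / of_int (\<beta> e)"

lemma ratio_nonzero: "e \<in> E \<Longrightarrow> ratio e \<noteq> 0"
  by (simp add: ratio_def alpha_nonzero beta_nonzero)

lemma ratio_ebar: "e \<in> E \<Longrightarrow> ratio (ebar e) = inverse (ratio e)"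
  by (simp add: ratio_def beta_ebar alpha_ebar)

text \<open>The product of the ratios \<open>\<alpha>/\<beta>\<close> along \<open>y\<^sub>1 \<cdots> y\<^sub>p\<close> only depends on
  \<open>\<rho>(w\<^sub>0\<^sub>,\<^sub>p)\<close>, since each letter contributes \<open>ratio d\<^bsup>\<plusminus>1\<^esup>\<close> for the
  \<open>d \<in> D\<close> it orients to.\<close>

definition weight :: "nat \<Rightarrow> rat" where
  "weight p = (\<Prod>d\<in>D. ratio d powi rho_prefix p d)"

lemma weight_nonzero: "weight p \<noteq> 0"
  unfolding weight_def using ratio_nonzero D_subset_E finite_D by (auto simp: prod_zero_iff)

lemma weight_cong: "\<forall>d\<in>D. rho_prefix p d = rho_prefix q d \<Longrightarrow> weight p = weight q"
  unfolding weight_def by (rule prod.cong) auto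

lemma prod_ratio_rho_letter:
  assumes e: "e \<in> E"
  shows "(\<Prod>d\<in>D. ratio d powi rho_letter e d) = ratio e"
proof -
  have e_ebar_d: "e = ebar d \<longleftrightarrow> d = ebar e" if "d \<in> D" for d
  proof
    assume "e = ebar d"
    then show "d = ebar e" using that D_subset_E by auto
  qed (use e in simp)
  show ?thesis
  proof (cases "e \<in> D")
    case True
    then have "ebar e \<notin> D" using in_D_iff_ebar_notin_D[OF e] by simp
    then have "ratio d powi rho_letter e d = (if d = e then ratio d else 1)" if "d \<in> D" for d
      using that e_ebar_d[OF that] by (auto simp: rho_letter_def)
    then show ?thesis using True finite_D by (simp cong: prod.cong)
  next
    case False
    then have ebar_D: "ebar e \<in> D" using in_D_iff_ebar_notin_D[OF e] by simp
    have "ratio d powi rho_letter e d = (if d = ebar e then inverse (ratio d) else 1)"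
      if "d \<in> D" for d
      using that False e_ebar_d[OF that] by (auto simp: rho_letter_def power_int_minus)
    then show ?thesis using ebar_D finite_D ratio_ebar[OF e] by (simp cong: prod.cong)
  qed
qed

lemma weight_Suc:
  assumes "Suc p \<le> n"
  shows "weight (Suc p) = weight p * ratio (y (Suc p))"
proof -
  have "weight (Suc p) =
      (\<Prod>d\<in>D. ratio d powi rho_prefix p d * ratio d powi rho_letter (y (Suc p)) d)"
    unfolding weight_def rho_prefix_Suc
    using ratio_nonzero D_subset_E by (intro prod.cong) (auto simp: power_int_add)
  also have "\<dots> = weight p * ratio (y (Suc p))"
    using prod_ratio_rho_letter[OF y_in_E] assms by (simp add: weight_def prod.distrib)
  finally show ?thesis .
qed

lemma prod_ratio_eq_weight_div:
  "i \<le> v \<Longrightarrow> v \<le> n \<Longrightarrow> (\<Prod>\<mu>\<in>{i+1..v}. ratio (y \<mu>)) = weight v / weight i"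
proof (induction v rule: dec_induct)
  case (step m)
  then show ?case using weight_Suc[of m] weight_nonzero by simp
qed (simp add: weight_nonzero)

definition weighted_sum :: "nat \<Rightarrow> rat" where
  "weighted_sum p = (\<Sum>t<p. of_int (k t) * weight t)"

lemma weighted_sum_Suc: "weighted_sum (Suc p) = weighted_sum p + of_int (k p) * weight p"
  by (simp add: weighted_sum_def)

lemma kq_eq_weighted_sum:
  assumes "i \<le> j" "j \<le> n"
  shows "kq \<alpha> \<beta> y k i j = (weighted_sum (Suc j) - weighted_sum i) / weight i"
proof -
  have "kq \<alpha> \<beta> y k i j = (\<Sum>v=i..j. of_int (k v) * (weight v / weight i))"
    unfolding kq_def ratio_def[symmetric] using assms prod_ratio_eq_weight_div
    by (intro sum.cong) auto
  also have "\<dots> = (\<Sum>v=i..j. of_int (k v) * weight v) / weight i"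
    by (simp add: sum_divide_distrib)
  also have "(\<Sum>v=i..j. of_int (k v) * weight v) = weighted_sum (Suc j) - weighted_sum i"
    using assms(1) by (induction j rule: dec_induct) (simp_all add: weighted_sum_Suc)
  finally show ?thesis .
qed

definition lattice_unit :: "nat \<Rightarrow> rat" where
  "lattice_unit p = of_int (\<beta> (y p)) * weight p"

lemma rho_prefix_swap:
  assumes p: "p \<in> {1..n}" and q: "q \<in> {1..n}" and y_pq: "y p = ebar (y q)"
  shows "(\<forall>d\<in>D. rho_prefix (q - 1) d = rho_prefix p d) \<longleftrightarrow>
    (\<forall>d\<in>D. rho_prefix (p - 1) d = rho_prefix q d)"
proof -
  have "rho_prefix p d = rho_prefix (p - 1) d + rho_letter (y p) d"
    "rho_prefix q d = rho_prefix (q - 1) d + rho_letter (y q) d" for d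
    using p q rho_prefix_Suc[of "p - 1"] rho_prefix_Suc[of "q - 1"] by simp_all
  moreover have "rho_letter (y p) d = - rho_letter (y q) d" if "d \<in> D" for d
    using rho_letter_ebar[OF y_in_E[OF q]] y_pq that D_subset_E by auto
  ultimately show ?thesis by force
qed

lemma lattice_unit_swap:
  assumes p: "p \<in> {1..n}" and q: "q \<in> {1..n}" and y_pq: "y p = ebar (y q)"
    and rho_eq: "\<forall>d\<in>D. rho_prefix (p - 1) d = rho_prefix q d"
  shows "lattice_unit q = lattice_unit p"
proof -
  have ep: "y p \<in> E" using y_in_E[OF p] .
  have "y q = ebar (y p)" using y_pq y_in_E[OF q] by simp
  then have "\<beta> (y q) = \<alpha> (y p)" using beta_ebar[OF ep] by simp
  moreover have "weight q = weight (p - 1)" using weight_cong rho_eq by metis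
  moreover have "weight p = weight (p - 1) * ratio (y p)" using weight_Suc[of "p - 1"] p by simp
  ultimately show ?thesis unfolding lattice_unit_def ratio_def using beta_nonzero[OF ep] by simp
qed

definition sim_by_prefixes :: "nat \<Rightarrow> nat \<Rightarrow> bool" where
  "sim_by_prefixes p q \<longleftrightarrow> p \<in> {1..n} \<and> q \<in> {1..n} \<and> y p = ebar (y q) \<and>
     (\<forall>d\<in>D. rho_prefix (p - 1) d = rho_prefix q d) \<and>
     (\<exists>m::int. weighted_sum q - weighted_sum p = of_int m * lattice_unit p)"

lemma simC_cond_iff:
  assumes "p < q" "p \<in> {1..n}" "q \<in> {1..n}" "y p = ebar (y q)"
  shows "simC_cond ebar \<alpha> \<beta> D y k p q \<longleftrightarrow> sim_by_prefixes p q"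
proof -
  have kq: "kq \<alpha> \<beta> y k p (q - 1) = (weighted_sum q - weighted_sum p) / weight p"
    using kq_eq_weighted_sum[of p "q - 1"] assms by simp
  have "(\<exists>m::int. kq \<alpha> \<beta> y k p (q - 1) = of_int (\<beta> (y p)) * of_int m) \<longleftrightarrow>
      (\<exists>m::int. weighted_sum q - weighted_sum p = of_int m * lattice_unit p)"
    unfolding kq lattice_unit_def using weight_nonzero[of p] by (simp add: field_simps)
  moreover have "(\<forall>d\<in>D. rho ebar y p (q - 1) d = 0) \<longleftrightarrow>
      (\<forall>d\<in>D. rho_prefix (q - 1) d = rho_prefix p d)"
    using rho_eq_diff[of p "q - 1"] assms(1) by auto
  ultimately show ?thesis
    unfolding simC_cond_def sim_by_prefixes_def using rho_prefix_swap assms by simp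
qed

lemma sim_by_prefixes_sym: "sim_by_prefixes p q \<Longrightarrow> sim_by_prefixes q p"
proof -
  assume pq: "sim_by_prefixes p q"
  then have p: "p \<in> {1..n}" and q: "q \<in> {1..n}" and y_pq: "y p = ebar (y q)"
    and rho_eq: "\<forall>d\<in>D. rho_prefix (p - 1) d = rho_prefix q d"
    by (auto simp: sim_by_prefixes_def)
  obtain m where "weighted_sum q - weighted_sum p = of_int m * lattice_unit p"
    using pq by (auto simp: sim_by_prefixes_def)
  then have "weighted_sum p - weighted_sum q = of_int (- m) * lattice_unit q"
    using lattice_unit_swap[OF p q y_pq rho_eq] by simp
  moreover have "y q = ebar (y p)" using y_pq y_in_E[OF q] by simp
  moreover have "\<forall>d\<in>D. rho_prefix (q - 1) d = rho_prefix p d"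
    using rho_prefix_swap[OF p q y_pq] rho_eq by simp
  ultimately show "sim_by_prefixes q p" using p q unfolding sim_by_prefixes_def by blast
qed

lemma sim_iff_sim_by_prefixes: "sim p q \<longleftrightarrow> sim_by_prefixes p q"
proof (cases "p \<in> {1..n} \<and> q \<in> {1..n} \<and> y p = ebar (y q)")
  case True
  then have p: "p \<in> {1..n}" and q: "q \<in> {1..n}" and y_pq: "y p = ebar (y q)" by auto
  then have y_qp: "y q = ebar (y p)" using y_in_E[OF q] by simp
  have "p \<noteq> q" using y_pq ebar_neq[OF y_in_E[OF q]] by auto
  then consider "p < q" | "q < p" by linarith
  then show ?thesis
  proof cases
    case 1
    then show ?thesis using simC_cond_iff[OF 1 p q y_pq] True by (simp add: simC_def)
  next
    case 2
    then have "sim p q \<longleftrightarrow> sim_by_prefixes q p"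
      using simC_cond_iff[OF 2 q p y_qp] True by (simp add: simC_def)
    then show ?thesis using sim_by_prefixes_sym by blast
  qed
qed (auto simp: simC_def sim_by_prefixes_def)

lemma sim_sym: "sim p q \<Longrightarrow> sim q p"
  using sim_by_prefixes_sym sim_iff_sim_by_prefixes by blast

text \<open>Together with symmetry this makes \<open>\<approx>\<close> transitive.\<close>

lemma sim_zigzag: "sim p q \<Longrightarrow> sim r q \<Longrightarrow> sim r s \<Longrightarrow> sim p s"
proof -
  assume "sim p q" "sim r q" "sim r s"
  then have pq: "sim_by_prefixes p q" and rq: "sim_by_prefixes r q" and rs: "sim_by_prefixes r s"
    using sim_iff_sim_by_prefixes by auto
  then have p: "p \<in> {1..n}" and r: "r \<in> {1..n}" and s: "s \<in> {1..n}"
    and y_pr: "y p = y r" and y_rs: "y r = ebar (y s)"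
    and rho_pr: "\<forall>d\<in>D. rho_prefix (p - 1) d = rho_prefix (r - 1) d"
    and rho_rs: "\<forall>d\<in>D. rho_prefix (r - 1) d = rho_prefix s d"
    by (auto simp: sim_by_prefixes_def)
  have "weight p = weight r"
    using weight_Suc[of "p - 1"] weight_Suc[of "r - 1"] weight_cong[OF rho_pr] p r y_pr by simp
  then have unit: "lattice_unit p = lattice_unit r" using y_pr by (simp add: lattice_unit_def)
  obtain m1 m2 m3 where
    "weighted_sum q - weighted_sum p = of_int m1 * lattice_unit p"
    "weighted_sum q - weighted_sum r = of_int m2 * lattice_unit r"
    "weighted_sum s - weighted_sum r = of_int m3 * lattice_unit r"
    using pq rq rs by (auto simp: sim_by_prefixes_def)
  then have "weighted_sum s - weighted_sum p = of_int (m3 - m2 + m1) * lattice_unit p"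
    using unit by (simp add: algebra_simps)
  then have "sim_by_prefixes p s"
    using p s y_pr y_rs rho_pr rho_rs unfolding sim_by_prefixes_def by (metis (full_types))
  then show "sim p s" using sim_iff_sim_by_prefixes by simp
qed

section \<open>Reducing \<open>w\<^sub>i\<^sub>,\<^sub>t\<close> letter by letter\<close>

text \<open>The numerical shadow of \<open>w\<^sub>p\<^sub>,\<^sub>t = a\<^sub>p\<^sup>c\<close>: \<open>\<rho>(w\<^sub>p\<^sub>,\<^sub>t) = 0\<close> and \<open>k\<^sub>p\<^sub>,\<^sub>t = c\<close>.\<close>

definition segment_collapses :: "nat \<Rightarrow> nat \<Rightarrow> int \<Rightarrow> bool" where
  "segment_collapses p t c \<longleftrightarrow>
     of_int c * weight p = weighted_sum (Suc t) - weighted_sum p \<and>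
     (\<forall>d\<in>D. rho_prefix p d = rho_prefix t d) \<and> a p = a t"

lemma segment_collapses_refl: "segment_collapses q q (k q)"
  by (simp add: segment_collapses_def weighted_sum_Suc)

lemma no_pinch_if_not_sim:
  assumes p: "p \<in> {1..n}" and top: "segment_collapses p t c" and not_sim: "\<not> sim p (Suc t)"
    and q: "Suc t \<le> n"
  shows "\<not> (y (Suc t) = ebar (y p) \<and> \<beta> (y p) dvd c)"
proof
  assume pinch: "y (Suc t) = ebar (y p) \<and> \<beta> (y p) dvd c"
  then obtain m where c: "c = \<beta> (y p) * m" by (auto simp: dvd_def)
  have ep: "y p \<in> E" using y_in_E[OF p] .
  have "rho_prefix (p - 1) d = rho_prefix (Suc t) d" if "d \<in> D" for d
  proof -
    have "rho_prefix (Suc t) d = rho_prefix p d + rho_letter (y (Suc t)) d"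
      using top that by (simp add: rho_prefix_Suc segment_collapses_def)
    also have "rho_prefix p d = rho_prefix (p - 1) d + rho_letter (y p) d"
      using p rho_prefix_Suc[of "p - 1"] by simp
    also have "rho_letter (y (Suc t)) d = - rho_letter (y p) d"
      using pinch rho_letter_ebar[OF ep] that D_subset_E by auto
    finally show ?thesis by simp
  qed
  moreover have "weighted_sum (Suc t) - weighted_sum p = of_int c * weight p"
    using top by (simp add: segment_collapses_def)
  then have "weighted_sum (Suc t) - weighted_sum p = of_int m * lattice_unit p"
    using c by (simp add: lattice_unit_def)
  ultimately have "sim_by_prefixes p (Suc t)"
    using p q pinch ep unfolding sim_by_prefixes_def by auto
  then show False using not_sim sim_iff_sim_by_prefixes by simp
qed

lemma segment_collapses_merge:
  assumes p: "p \<in> {1..n}" and q: "Suc t \<le> n" and s: "sim p (Suc t)"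
    and below: "segment_collapses p' (p - 1) c'" and top: "segment_collapses p t c"
  shows "c = \<beta> (y p) * (c div \<beta> (y p))"
    and "segment_collapses p' (Suc t) (c' + c div \<beta> (y p) * \<alpha> (y p) + k (Suc t))"
proof -
  let ?q = "Suc t"
  have ep: "y p \<in> E" using y_in_E[OF p] .
  obtain m where m: "weighted_sum ?q - weighted_sum p = of_int m * lattice_unit p"
    and y_pq: "y p = ebar (y ?q)" and rho_pq: "\<forall>d\<in>D. rho_prefix (p - 1) d = rho_prefix ?q d"
    using s sim_iff_sim_by_prefixes by (auto simp: sim_by_prefixes_def)
  have "of_int c * weight p = weighted_sum ?q - weighted_sum p"
    using top by (simp add: segment_collapses_def)
  also have "\<dots> = of_int (\<beta> (y p) * m) * weight p"
    using m by (simp add: lattice_unit_def)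
  finally have "of_int c * weight p = of_int (\<beta> (y p) * m) * weight p" .
  then have "(of_int c :: rat) = of_int (\<beta> (y p) * m)" using weight_nonzero[of p] by simp
  then have c: "c = \<beta> (y p) * m" by (simp only: of_int_eq_iff)
  then show "c = \<beta> (y p) * (c div \<beta> (y p))" using beta_nonzero[OF ep] by simp
  have p1: "Suc (p - 1) = p" using p by simp
  have weight_q: "weight ?q = weight p'" and weight_p: "weight p = weight p' * ratio (y p)"
    using weight_cong rho_pq below weight_Suc[of "p - 1"] p
    by (auto simp: segment_collapses_def)
  have "weighted_sum p = weighted_sum p' + of_int c' * weight p'"
    using below p1 by (simp add: segment_collapses_def)
  moreover have "weighted_sum ?q = weighted_sum p + of_int m * of_int (\<alpha> (y p)) * weight p'"
    using m weight_p beta_nonzero[OF ep] by (simp add: lattice_unit_def ratio_def algebra_simps)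
  moreover have "weighted_sum (Suc ?q) = weighted_sum ?q + of_int (k ?q) * weight p'"
    using weighted_sum_Suc weight_q by simp
  ultimately have "of_int (c' + c div \<beta> (y p) * \<alpha> (y p) + k ?q) * weight p' =
      weighted_sum (Suc ?q) - weighted_sum p'"
    using c beta_nonzero[OF ep] by (simp add: algebra_simps)
  moreover have "a p' = a ?q"
    using below y_pq tau_y[of ?q] iota_y[OF p] y_in_E[of ?q] q
    by (simp add: segment_collapses_def iota_ebar)
  ultimately show "segment_collapses p' ?q (c' + c div \<beta> (y p) * \<alpha> (y p) + k ?q)"
    using below rho_pq by (simp add: segment_collapses_def)
qed

text \<open>A stack \<open>[(p\<^sub>r, c\<^sub>r), \<dots>, (p\<^sub>1, c\<^sub>1), (i, c\<^sub>0)]\<close> represents the word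
  \<open>a\<^sub>i\<^sup>c\<^sub>0 y\<^sub>p\<^sub>1 a\<^sub>p\<^sub>1\<^sup>c\<^sub>1 \<cdots> y\<^sub>p\<^sub>r a\<^sub>p\<^sub>r\<^sup>c\<^sub>r\<close>; each segment ends just before the next one starts.\<close>

fun stack_ok :: "nat \<Rightarrow> nat \<Rightarrow> (nat \<times> int) list \<Rightarrow> bool" where
  "stack_ok i t [] \<longleftrightarrow> False"
| "stack_ok i t [(p, c)] \<longleftrightarrow> p = i \<and> i \<le> t \<and> segment_collapses p t c"
| "stack_ok i t ((p, c) # (p', c') # rest) \<longleftrightarrow>
     i < p \<and> p \<le> t \<and> segment_collapses p t c \<and> stack_ok i (p - 1) ((p', c') # rest) \<and>
     (p' \<noteq> i \<longrightarrow> \<not> (y p = ebar (y p') \<and> \<beta> (y p') dvd c'))"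

definition segment_word :: "nat \<Rightarrow> nat \<times> int \<Rightarrow> (('v + 'e) \<times> bool) list" where
  "segment_word i s =
    (if fst s = i then [] else [(Inr (y (fst s)), True)]) @ gpow (Inl (a (fst s))) (snd s)"

definition stack_word :: "nat \<Rightarrow> (nat \<times> int) list \<Rightarrow> (('v + 'e) \<times> bool) list" where
  "stack_word i st = concat (map (segment_word i) (rev st))"

lemma stack_word_Cons: "stack_word i (s # st) = stack_word i st @ segment_word i s"
  by (simp add: stack_word_def)

fun stack_push :: "nat \<Rightarrow> (nat \<times> int) list \<Rightarrow> (nat \<times> int) list" where
  "stack_push q ((p, c) # (p', c') # rest) =
    (if sim p q then (p', c' + c div \<beta> (y p) * \<alpha> (y p) + k q) # rest
     else (q, k q) # (p, c) # (p', c') # rest)"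
| "stack_push q st = (q, k q) # st"

lemma stack_ok_top:
  "stack_ok i t ((p, c) # st) \<Longrightarrow> segment_collapses p t c \<and> i \<le> p \<and> p \<le> t \<and> (st \<noteq> [] \<longleftrightarrow> i < p)"
  by (cases st) auto

lemma stack_ok_retarget:
  "stack_ok i t ((p, c) # rest) \<Longrightarrow> t \<le> t' \<Longrightarrow> segment_collapses p t' c' \<Longrightarrow>
    stack_ok i t' ((p, c') # rest)"
  by (cases rest) auto

lemma stack_ok_push:
  assumes ok: "stack_ok i t ((p, c) # rest)" and q: "Suc t \<le> n"
    and not_sim: "p \<noteq> i \<Longrightarrow> \<not> sim p (Suc t)"
  shows "stack_ok i (Suc t) ((Suc t, k (Suc t)) # (p, c) # rest)"
proof -
  have "i \<le> p" "p \<le> t" "segment_collapses p t c" using stack_ok_top[OF ok] by auto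
  moreover have "p \<noteq> i \<Longrightarrow> \<not> (y (Suc t) = ebar (y p) \<and> \<beta> (y p) dvd c)"
    using no_pinch_if_not_sim not_sim q calculation by simp
  ultimately show ?thesis using ok segment_collapses_refl by auto
qed

lemma stack_collapse:
  assumes ok: "stack_ok i t ((p, c) # (p', c') # rest)" and q: "Suc t \<le> n" and s: "sim p (Suc t)"
  defines "c'' \<equiv> c' + c div \<beta> (y p) * \<alpha> (y p) + k (Suc t)"
  shows "stack_ok i (Suc t) ((p', c'') # rest)"
    and "pres_eq relators
      (stack_word i ((p, c) # (p', c') # rest) @ segment_word i (Suc t, k (Suc t)))
      (stack_word i ((p', c'') # rest))"
proof -
  have ip: "i < p" and pt: "p \<le> t" and top: "segment_collapses p t c"
    and ok': "stack_ok i (p - 1) ((p', c') # rest)" using ok by auto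
  have p: "p \<in> {1..n}" using ip pt q by simp
  have below: "segment_collapses p' (p - 1) c'" using stack_ok_top[OF ok'] by simp
  note merged = segment_collapses_merge[OF p q s below top]
  show "stack_ok i (Suc t) ((p', c'') # rest)"
    unfolding c''_def using stack_ok_retarget[OF ok' _ merged(2)] pt by simp
  have ep: "y p \<in> E" using y_in_E[OF p] .
  have y_q: "y (Suc t) = ebar (y p)" and a_q: "a (Suc t) = \<iota> (y p)"
    using s merged(2) below iota_y[OF p] y_in_E[of "Suc t"] q
    by (auto simp: simC_def segment_collapses_def)
  have a_p': "a p' = \<iota> (y p)" using below iota_y[OF p] by (simp add: segment_collapses_def)
  let ?pre = "stack_word i rest @ (if p' = i then [] else [(Inr (y p'), True)])"
  have "stack_word i ((p, c) # (p', c') # rest) @ segment_word i (Suc t, k (Suc t))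
     = ?pre @ (gpow (Inl (\<iota> (y p))) c' @ [(Inr (y p), True)] @
         gpow (Inl (\<tau> (y p))) (\<beta> (y p) * (c div \<beta> (y p))) @ [(Inr (ebar (y p)), True)] @
         gpow (Inl (\<iota> (y p))) (k (Suc t)))"
    using ip pt y_q a_q a_p' tau_y[OF p] merged(1)[symmetric]
    by (simp add: stack_word_Cons segment_word_def)
  also have "pres_eq relators \<dots> (?pre @ gpow (Inl (\<iota> (y p))) c'')"
    using pres_eq_append_left[OF pinch_collapse[OF ep, of c' "c div \<beta> (y p)" "k (Suc t)"], of ?pre]
    unfolding c''_def by (simp add: mult.commute)
  also have "?pre @ gpow (Inl (\<iota> (y p))) c'' = stack_word i ((p', c'') # rest)"
    using a_p' by (simp add: stack_word_Cons segment_word_def)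
  finally show "pres_eq relators
      (stack_word i ((p, c) # (p', c') # rest) @ segment_word i (Suc t, k (Suc t)))
      (stack_word i ((p', c'') # rest))" .
qed

lemma wword_Suc:
  "i \<le> t \<Longrightarrow> wword a y k i (Suc t) = wword a y k i t @ segment_word i (Suc t, k (Suc t))"
  by (simp add: wword_def segment_word_def)

lemma stack_step:
  assumes ok: "stack_ok i t st" and q: "Suc t \<le> n"
    and w: "pres_eq relators (wword a y k i t) (stack_word i st)"
  shows "stack_ok i (Suc t) (stack_push (Suc t) st) \<and>
    pres_eq relators (wword a y k i (Suc t)) (stack_word i (stack_push (Suc t) st))"
proof -
  obtain p c rest where st: "st = (p, c) # rest" using ok by (cases st) auto
  have i_le: "i \<le> t" using stack_ok_top ok st by fastforce
  then have w': "pres_eq relators (wword a y k i (Suc t))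
      (stack_word i st @ segment_word i (Suc t, k (Suc t)))"
    using pres_eq_append_right[OF w] by (simp add: wword_Suc)
  show ?thesis
  proof (cases "rest \<noteq> [] \<and> sim p (Suc t)")
    case True
    then obtain p' c' rest' where rest: "rest = (p', c') # rest'" by (cases rest) auto
    then show ?thesis
      using stack_collapse[OF ok[unfolded st rest] q] True w' st
      by (auto intro: pres_eq.pe_trans)
  next
    case False
    then have push: "stack_push (Suc t) st = (Suc t, k (Suc t)) # st"
      using st by (cases rest rule: list.exhaust) auto
    have "p \<noteq> i \<Longrightarrow> rest \<noteq> []" using ok st by (cases rest) auto
    then have "p \<noteq> i \<Longrightarrow> \<not> sim p (Suc t)" using False by blast
    then have "stack_ok i (Suc t) ((Suc t, k (Suc t)) # st)"
      using stack_ok_push ok q unfolding st by blast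
    then show ?thesis using push w' by (simp add: stack_word_Cons)
  qed
qed

definition stack :: "nat \<Rightarrow> nat \<Rightarrow> (nat \<times> int) list" where
  "stack i t = fold stack_push [Suc i..<Suc t] [(i, k i)]"

lemma stack_Suc: "i \<le> t \<Longrightarrow> stack i (Suc t) = stack_push (Suc t) (stack i t)"
  by (simp add: stack_def)

lemma stack_invariant:
  "i \<le> t \<Longrightarrow> t \<le> n \<Longrightarrow>
    stack_ok i t (stack i t) \<and> pres_eq relators (wword a y k i t) (stack_word i (stack i t))"
proof (induction t rule: dec_induct)
  case base
  have "stack_word i [(i, k i)] = wword a y k i i"
    by (simp add: stack_word_def segment_word_def wword_def)
  then show ?case using segment_collapses_refl by (simp add: stack_def pres_eq.pe_refl)
next
  case (step t)
  then show ?case using stack_step[of i t "stack i t"] stack_Suc by simp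
qed

lemma stack_word_reduced:
  "stack_ok i t st \<Longrightarrow> t \<le> n \<Longrightarrow>
    \<exists>c L. stack_word i st = gpow (Inl (a i)) c @ edge_word L \<and> reduced_path L \<and>
      (L = [] \<longleftrightarrow> tl st = []) \<and> (L \<noteq> [] \<longrightarrow> last L = (y (fst (hd st)), snd (hd st)))"
proof (induction i t st rule: stack_ok.induct)
  case (2 i t p c)
  then have "stack_word i [(p, c)] = gpow (Inl (a i)) c @ edge_word []"
    by (simp add: stack_word_def segment_word_def edge_word_def)
  then show ?case by fastforce
next
  case (3 i t p c p' c' rest)
  then have ip: "i < p" and pt: "p \<le> t" and ok': "stack_ok i (p - 1) ((p', c') # rest)"
    and no_pinch: "p' \<noteq> i \<longrightarrow> \<not> (y p = ebar (y p') \<and> \<beta> (y p') dvd c')" by auto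
  obtain c0 L where IH: "stack_word i ((p', c') # rest) = gpow (Inl (a i)) c0 @ edge_word L"
    "reduced_path L" "L = [] \<longleftrightarrow> rest = []" "L \<noteq> [] \<longrightarrow> last L = (y p', c')"
    using "3.IH"[OF ok'] "3.prems" pt by fastforce
  have p: "p \<in> {1..n}" using ip pt "3.prems" by simp
  have below: "segment_collapses p' (p - 1) c'" using stack_ok_top[OF ok'] by simp
  have "stack_word i ((p, c) # (p', c') # rest) = gpow (Inl (a i)) c0 @ edge_word (L @ [(y p, c)])"
    using IH(1) ip tau_y[OF p]
    by (simp add: stack_word_Cons segment_word_def edge_word_append edge_word_def)
  moreover have "reduced_path (L @ [(y p, c)])"
  proof (rule reduced_path_snoc[OF IH(2) y_in_E[OF p]], intro impI)
    assume "L \<noteq> []"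
    then have ip': "i < p'" using IH(3) ok' stack_ok_top by auto
    then have "p' \<in> {1..n}" using stack_ok_top[OF ok'] p by auto
    then have "\<tau> (y p') = \<iota> (y p)"
      using tau_y iota_y[OF p] below by (simp add: segment_collapses_def)
    then show "\<tau> (fst (last L)) = \<iota> (y p) \<and>
        \<not> (y p = ebar (fst (last L)) \<and> \<beta> (fst (last L)) dvd snd (last L))"
      using IH(4) \<open>L \<noteq> []\<close> no_pinch ip' by simp
  qed
  ultimately show ?case by fastforce
qed simp

fun push_index :: "nat \<Rightarrow> nat list \<Rightarrow> nat list" where
  "push_index q [] = [q]"
| "push_index q (p # ps) = (if sim p q then ps else q # p # ps)"

lemma positions_stack_push:
  "st \<noteq> [] \<Longrightarrow> map fst (butlast (stack_push q st)) = push_index q (map fst (butlast st))"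
  by (induction q st rule: stack_push.induct) auto

lemma positions_stack:
  "i \<le> t \<Longrightarrow> t \<le> n \<Longrightarrow> map fst (butlast (stack i t)) = fold push_index [Suc i..<Suc t] []"
proof (induction t rule: dec_induct)
  case (step t)
  have "stack i t \<noteq> []" using stack_invariant[of i t] step by (cases "stack i t") auto
  then show ?case using step stack_Suc positions_stack_push by simp
qed (simp add: stack_def)

lemma fold_push_letter_map:
  assumes "\<forall>p\<in>set ps \<union> set qs. \<forall>q\<in>set qs. (fst (f p) = fst (f q) \<and> snd (f p) \<noteq> snd (f q)) = sim p q"
  shows "fold push_letter (map f qs) (map f ps) = map f (fold push_index qs ps)"
  using assms
proof (induction qs arbitrary: ps)
  case (Cons q qs)
  have "push_letter (f q) (map f ps) = map f (push_index q ps)"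
    using Cons.prems by (cases ps) auto
  moreover have "set (push_index q ps) \<subseteq> insert q (set ps)" by (cases ps) auto
  then have "fold push_letter (map f qs) (map f (push_index q ps)) =
      map f (fold push_index qs (push_index q ps))"
    using Cons.prems by (intro Cons.IH) auto
  ultimately show ?case by simp
qed simp

section \<open>The alphabet \<open>\<Sigma>\<^sub>w\<close>\<close>

abbreviation approx' :: "nat \<Rightarrow> nat \<Rightarrow> bool" where
  "approx' p q \<equiv> approx n ebar \<alpha> \<beta> D y k p q"

abbreviation cls' :: "nat \<Rightarrow> nat set" where
  "cls' p \<equiv> cls n ebar \<alpha> \<beta> D y k p"

abbreviation sbar' :: "nat set \<times> bool \<Rightarrow> nat set \<times> bool" where
  "sbar' \<equiv> sbar n ebar \<alpha> \<beta> D y k"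

lemma approx_sim_sim: "approx' p q \<Longrightarrow> sim q r \<Longrightarrow> sim p r"
  unfolding approx_def by (metis sim_sym sim_zigzag)

lemma approx_sym: "approx' p q \<Longrightarrow> approx' q p"
  unfolding approx_def by (metis sim_sym)

lemma approx_trans: "approx' p q \<Longrightarrow> approx' q r \<Longrightarrow> approx' p r"
proof -
  assume pq: "approx' p q" and qr: "approx' q r"
  show "approx' p r"
  proof (cases "q = r")
    case False
    then obtain l where "sim q l" "sim l r" using qr by (auto simp: approx_def)
    then show ?thesis using approx_sim_sim[OF pq] pq qr by (auto simp: approx_def)
  qed (use pq in simp)
qed

lemma cls_eq_iff:
  assumes "p \<in> {1..n}" "q \<in> {1..n}"
  shows "cls' p = cls' q \<longleftrightarrow> approx' p q"
proof
  assume "cls' p = cls' q"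
  moreover have "q \<in> cls' q" using assms(2) by (simp add: cls_def approx_def)
  ultimately show "approx' p q" unfolding cls_def by blast
next
  assume "approx' p q"
  then show "cls' p = cls' q" unfolding cls_def using approx_sym approx_trans by blast
qed

lemma cls_has_partner_iff:
  assumes "q \<in> {1..n}"
  shows "(\<exists>i\<in>cls' q. \<exists>j. sim i j) \<longleftrightarrow> (\<exists>j. sim q j)"
proof
  assume "\<exists>i\<in>cls' q. \<exists>j. sim i j"
  then obtain i j where "approx' q i" "sim i j" by (auto simp: cls_def)
  then show "\<exists>j. sim q j" using approx_sim_sim by blast
next
  assume "\<exists>j. sim q j"
  moreover have "q \<in> cls' q" using assms by (simp add: cls_def approx_def)
  ultimately show "\<exists>i\<in>cls' q. \<exists>j. sim i j" by blast
qed

lemma sbar_cls_eq_iff: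
  assumes p: "p \<in> {1..n}" and q: "q \<in> {1..n}"
  shows "sbar' (cls' q, False) = (cls' p, False) \<longleftrightarrow> sim q p"
proof (cases "\<exists>j. sim q j")
  case True
  then have partner: "\<exists>j. \<exists>i\<in>cls' q. sim i j" using cls_has_partner_iff[OF q] by blast
  define j0 where "j0 = (SOME j. \<exists>i\<in>cls' q. sim i j)"
  have "\<exists>i\<in>cls' q. sim i j0" unfolding j0_def using someI_ex[OF partner] .
  then obtain i where "approx' q i" "sim i j0" by (auto simp: cls_def)
  then have q_j0: "sim q j0" by (rule approx_sim_sim)
  then have j0: "j0 \<in> {1..n}" by (simp add: simC_def)
  have "\<exists>i\<in>cls' q. \<exists>j. sim i j" using partner by blast
  then have "sbar' (cls' q, False) = (cls' j0, False)"
    unfolding sbar_def j0_def by (simp only: fst_conv snd_conv if_False if_True)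
  moreover have "approx' j0 p \<longleftrightarrow> sim q p"
  proof
    assume "approx' j0 p"
    then have "sim p q" using approx_sim_sim[OF approx_sym] sim_sym[OF q_j0] by blast
    then show "sim q p" by (rule sim_sym)
  next
    assume "sim q p"
    then show "approx' j0 p" using sim_sym[OF q_j0] j0 p unfolding approx_def by blast
  qed
  ultimately show ?thesis using cls_eq_iff[OF j0 p] by simp
next
  case False
  then have "\<not> (\<exists>i\<in>cls' q. \<exists>j. sim i j)" using cls_has_partner_iff[OF q] by simp
  then have "sbar' (cls' q, False) = (cls' q, True)"
    unfolding sbar_def by (simp only: fst_conv snd_conv if_False if_not_P)
  then show ?thesis using False by simp
qed

lemma toF_inverse_iff_sim:
  assumes \<Lambda>: "Lambda_ok n ebar \<alpha> \<beta> D y k \<Lambda>" and p: "p \<in> {1..n}" and q: "q \<in> {1..n}"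
  defines "f \<equiv> \<lambda>v. toF n ebar \<alpha> \<beta> D y k \<Lambda> (cls' v, False)"
  shows "(fst (f p) = fst (f q) \<and> snd (f p) \<noteq> snd (f q)) \<longleftrightarrow> sim p q"
proof -
  have "(cls' v, False) \<in> Sigma_w n ebar \<alpha> \<beta> D y k" if "v \<in> {1..n}" for v
    using that by (auto simp: Sigma_w_def)
  then have choice: "(cls' p, False) \<in> \<Lambda> \<longleftrightarrow> sbar' (cls' p, False) \<notin> \<Lambda>"
    using \<Lambda> p unfolding Lambda_ok_def by blast
  have qp: "sbar' (cls' q, False) = (cls' p, False) \<longleftrightarrow> sim p q"
    using sbar_cls_eq_iff[OF p q] sim_sym by blast
  have pq: "sbar' (cls' p, False) = (cls' q, False) \<longleftrightarrow> sim p q"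
    using sbar_cls_eq_iff[OF q p] .
  show ?thesis
  proof (cases "(cls' p, False) \<in> \<Lambda>")
    case True
    then show ?thesis
      using choice pq qp unfolding f_def toF_def by (cases "(cls' q, False) \<in> \<Lambda>") auto
  next
    case False
    then show ?thesis
      using choice pq qp unfolding f_def toF_def by (cases "(cls' q, False) \<in> \<Lambda>") auto
  qed
qed

lemma wword_power_iff:
  assumes "i \<le> j" "j \<le> n"
  shows "(\<exists>m. pres_eq relators (wword a y k i j) (gpow (Inl (a i)) m)) \<longleftrightarrow> tl (stack i j) = []"
proof -
  have ok: "stack_ok i j (stack i j)"
    and w: "pres_eq relators (wword a y k i j) (stack_word i (stack i j))"
    using stack_invariant[OF assms] by auto
  obtain c L where st: "stack_word i (stack i j) = gpow (Inl (a i)) c @ edge_word L"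
    and L: "reduced_path L" "L = [] \<longleftrightarrow> tl (stack i j) = []"
    using stack_word_reduced[OF ok assms(2)] by blast
  show ?thesis
  proof
    assume "\<exists>m. pres_eq relators (wword a y k i j) (gpow (Inl (a i)) m)"
    then obtain m where "pres_eq relators (wword a y k i j) (gpow (Inl (a i)) m)" ..
    then have "pres_eq relators (gpow (Inl (a i)) c @ edge_word L) (gpow (Inl (a i)) m)"
      using pres_eq.pe_trans[OF pres_eq.pe_sym[OF w]] st by simp
    then show "tl (stack i j) = []" using britton[OF L(1)] L(2) by blast
  next
    assume "tl (stack i j) = []"
    then show "\<exists>m. pres_eq relators (wword a y k i j) (gpow (Inl (a i)) m)"
      using w st L(2) by (auto simp: edge_word_def)
  qed
qed

lemma Cword_trivial_iff:
  assumes \<Lambda>: "Lambda_ok n ebar \<alpha> \<beta> D y k \<Lambda>" and "i \<le> j" "j \<le> n"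
  shows "pres_eq {} (map (toF n ebar \<alpha> \<beta> D y k \<Lambda>) (Cword n ebar \<alpha> \<beta> D y k i j)) [] \<longleftrightarrow>
    tl (stack i j) = []"
proof -
  define f where "f = (\<lambda>v. toF n ebar \<alpha> \<beta> D y k \<Lambda> (cls' v, False))"
  have "map (toF n ebar \<alpha> \<beta> D y k \<Lambda>) (Cword n ebar \<alpha> \<beta> D y k i j) = map f [Suc i..<Suc j]"
    by (simp add: Cword_def f_def)
  then have "pres_eq {} (map (toF n ebar \<alpha> \<beta> D y k \<Lambda>) (Cword n ebar \<alpha> \<beta> D y k i j)) [] \<longleftrightarrow>
      fold push_letter (map f [Suc i..<Suc j]) (map f []) = []"
    by (simp add: pres_eq_free_Nil_iff)
  also have "\<dots> \<longleftrightarrow> fold push_index [Suc i..<Suc j] [] = []"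
  proof -
    have "\<forall>p\<in>set [] \<union> set [Suc i..<Suc j]. \<forall>q\<in>set [Suc i..<Suc j].
        (fst (f p) = fst (f q) \<and> snd (f p) \<noteq> snd (f q)) = sim p q"
    proof (intro ballI)
      fix p q assume "p \<in> set [] \<union> set [Suc i..<Suc j]" "q \<in> set [Suc i..<Suc j]"
      then have "p \<in> {1..n}" "q \<in> {1..n}" using assms(3) by auto
      then show "(fst (f p) = fst (f q) \<and> snd (f p) \<noteq> snd (f q)) = sim p q"
        unfolding f_def by (rule toF_inverse_iff_sim[OF \<Lambda>])
    qed
    from fold_push_letter_map[OF this] show ?thesis by simp
  qed
  also have "\<dots> \<longleftrightarrow> butlast (stack i j) = []"
    using positions_stack[OF assms(2,3)] by (metis Nil_is_map_conv)
  also have "\<dots> \<longleftrightarrow> tl (stack i j) = []"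
    using stack_invariant[OF assms(2,3)] by (cases "stack i j") (auto simp: butlast_conv_take)
  finally show ?thesis .
qed

end

theorem lemma3p6:
  fixes V :: "'v set" and E :: "'e set" and \<iota> \<tau> :: "'e \<Rightarrow> 'v" and ebar :: "'e \<Rightarrow> 'e"
    and \<alpha> \<beta> :: "'e \<Rightarrow> int" and n :: nat and a :: "nat \<Rightarrow> 'v" and y :: "nat \<Rightarrow> 'e"
    and k :: "nat \<Rightarrow> int" and D :: "'e set" and \<Lambda> :: "(nat set \<times> bool) set" and i j :: nat
  assumes "gbs_graph V E \<iota> \<tau> ebar \<alpha> \<beta>"
    and "gbs_factorization V E \<iota> \<tau> n a y"
    and "orientation E ebar D"
    and "Lambda_ok n ebar \<alpha> \<beta> D y k \<Lambda>"
    and "i \<le> j" and "j \<le> n"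
  shows "(\<exists>m::int. pres_eq (gbs_relators E \<iota> \<tau> ebar \<alpha> \<beta>) (wword a y k i j) (gpow (Inl (a i)) m))
     \<longleftrightarrow> pres_eq {} (map (toF n ebar \<alpha> \<beta> D y k \<Lambda>) (Cword n ebar \<alpha> \<beta> D y k i j)) []"
proof -
  interpret factorized_word V E \<iota> \<tau> ebar \<alpha> \<beta> n a y k D
    using assms(1-3) by unfold_locales
  show ?thesis
    using wword_power_iff[OF assms(5,6)] Cword_trivial_iff[OF assms(4-6)] by simp
qed

end
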